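(* For every graph $G$: (1) if the cutset hypergraph $\mathcal{C}(G)$ is $1$-Sperner, then $G$ is connected-domishold; (2) if $G$ is connected-domishold, then $\mathcal{C}(G)$ is $2$-asummable.
   Context: A connected dominating set (CD set) of a connected graph $G$ is a set $S\subseteq V(G)$ that is dominating (every vertex outside $S$ has a neighbor in $S$) and induces a connected subgraph. A graph $G=(V,E)$ is connected-domishold if there exist $w:V\to\mathbb{R}_{\ge 0}$, $t\in\mathbb{R}_{\ge 0}$ such that for all $S\subseteq V$, $\sum_{x\in S}w(x)\ge t$ iff $S$ is a CD set; disconnected graphs are considered connected-domishold by convention. A cutset is a set $S\subseteq V(G)$ with $G-S$ disconnected; minimal if it contains no other cutset. The cutset hypergraph $\mathcal{C}(G)$ has vertex set $V(G)$ and hyperedges the minimal cutsets. A hypergraph is $1$-Sperner if for every two distinct hyperedges $e,f$, $\min\{|e\setminus f|,|f\setminus e|\}=1$. A hypergraph $\mathcal{H}=(V,E)$ is $2$-summable if there exist subsets $A_1,A_2\subseteq V$, each containing a hyperedge, and $B_1,B_2\subseteq V$, each containing no hyperedge, such that for every $v\in V$, $|\{i:v\in A_i\}|=|\{i:v\in B_i\}|$; it is $2$-asummable otherwise. *)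

theory Defs
  imports Complex_Main
begin

definition graph :: "'a set \<Rightarrow> ('a \<Rightarrow> 'a \<Rightarrow> bool) \<Rightarrow> bool" where
  "graph V E \<longleftrightarrow> finite V \<and> (\<forall>x y. E x y \<longrightarrow> x \<in> V \<and> y \<in> V)
     \<and> (\<forall>x y. E x y \<longrightarrow> E y x) \<and> (\<forall>x. \<not> E x x)"

definition connected_on :: "('a \<Rightarrow> 'a \<Rightarrow> bool) \<Rightarrow> 'a set \<Rightarrow> bool" where
  "connected_on E S \<longleftrightarrow>
     (\<forall>x\<in>S. \<forall>y\<in>S. (\<lambda>u v. E u v \<and> u \<in> S \<and> v \<in> S)\<^sup>*\<^sup>* x y)"

definition dominating :: "'a set \<Rightarrow> ('a \<Rightarrow> 'a \<Rightarrow> bool) \<Rightarrow> 'a set \<Rightarrow> bool" where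
  "dominating V E S \<longleftrightarrow> S \<subseteq> V \<and> (\<forall>v\<in>V - S. \<exists>u\<in>S. E v u)"

definition cd_set :: "'a set \<Rightarrow> ('a \<Rightarrow> 'a \<Rightarrow> bool) \<Rightarrow> 'a set \<Rightarrow> bool" where
  "cd_set V E S \<longleftrightarrow> dominating V E S \<and> connected_on E S"

definition connected_domishold :: "'a set \<Rightarrow> ('a \<Rightarrow> 'a \<Rightarrow> bool) \<Rightarrow> bool" where
  "connected_domishold V E \<longleftrightarrow> \<not> connected_on E V \<or>
     (\<exists>(w :: 'a \<Rightarrow> real) (t :: real). (\<forall>x\<in>V. w x \<ge> 0) \<and> t \<ge> 0 \<and>
        (\<forall>S. S \<subseteq> V \<longrightarrow> (sum w S \<ge> t \<longleftrightarrow> cd_set V E S)))"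

definition cutset :: "'a set \<Rightarrow> ('a \<Rightarrow> 'a \<Rightarrow> bool) \<Rightarrow> 'a set \<Rightarrow> bool" where
  "cutset V E S \<longleftrightarrow> S \<subseteq> V \<and> \<not> connected_on E (V - S)"

definition minimal_cutset :: "'a set \<Rightarrow> ('a \<Rightarrow> 'a \<Rightarrow> bool) \<Rightarrow> 'a set \<Rightarrow> bool" where
  "minimal_cutset V E S \<longleftrightarrow> cutset V E S \<and> (\<forall>T. T \<subset> S \<longrightarrow> \<not> cutset V E T)"

definition cutset_hyperedges :: "'a set \<Rightarrow> ('a \<Rightarrow> 'a \<Rightarrow> bool) \<Rightarrow> 'a set set" where
  "cutset_hyperedges V E = {S. minimal_cutset V E S}"

text \<open>Hypergraphs are given as (vertex set, set of hyperedges).\<close>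
definition one_sperner :: "'a set set \<Rightarrow> bool" where
  "one_sperner H \<longleftrightarrow> (\<forall>e\<in>H. \<forall>f\<in>H. e \<noteq> f \<longrightarrow> min (card (e - f)) (card (f - e)) = 1)"

definition two_summable :: "'a set \<Rightarrow> 'a set set \<Rightarrow> bool" where
  "two_summable V H \<longleftrightarrow> (\<exists>A1 A2 B1 B2.
     A1 \<subseteq> V \<and> A2 \<subseteq> V \<and> B1 \<subseteq> V \<and> B2 \<subseteq> V \<and>
     (\<exists>e\<in>H. e \<subseteq> A1) \<and> (\<exists>e\<in>H. e \<subseteq> A2) \<and>
     (\<forall>e\<in>H. \<not> e \<subseteq> B1) \<and> (\<forall>e\<in>H. \<not> e \<subseteq> B2) \<and>
     (\<forall>v\<in>V. (of_bool (v \<in> A1) + of_bool (v \<in> A2) :: nat)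
             = of_bool (v \<in> B1) + of_bool (v \<in> B2)))"

definition two_asummable :: "'a set \<Rightarrow> 'a set set \<Rightarrow> bool" where
  "two_asummable V H \<longleftrightarrow> \<not> two_summable V H"

end

theory Submission
  imports Defs
begin

text \<open>For V \<noteq> {}, a set S is a CD set iff it is nonempty and V - S contains no minimal
  cutset. Part (1): the up-closure of a 1-Sperner hypergraph is a threshold predicate. This goes by
  induction on the number of vertices: there is a pivot vertex z such that every edge through z,
  minus z, lies in the common part I of the edges avoiding z. The edges through z (minus z) and the
  edges avoiding z (minus I) form 1-Sperner hypergraphs on I and on V - z - I, and threshold weights
  for the two glue to weights for the whole hypergraph. Passing to complements turns them into
  weights for the CD sets. Part (2): for weights w and threshold t of the CD sets, V - A1 and
  V - A2 are not CD while V - B1 and V - B2 are, so equal membership counts would give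
  w(V - A1) + w(V - A2) < 2t \<le> w(V - B1) + w(V - B2) for two equal sums.\<close>

text \<open>Weights at least 1 and the margin 1 are normalisations that the gluing construction
  below relies on.\<close>

definition threshold_weights ::
    "'a set \<Rightarrow> ('a set \<Rightarrow> bool) \<Rightarrow> ('a \<Rightarrow> real) \<Rightarrow> real \<Rightarrow> bool" where
  "threshold_weights A F w t \<longleftrightarrow> (\<forall>v\<in>A. 1 \<le> w v) \<and>
     (\<forall>X. X \<subseteq> A \<longrightarrow> (F X \<longrightarrow> t \<le> sum w X) \<and> (\<not> F X \<longrightarrow> sum w X + 1 \<le> t))"

definition threshold_on :: "'a set \<Rightarrow> ('a set \<Rightarrow> bool) \<Rightarrow> bool" where
  "threshold_on A F \<longleftrightarrow> (\<exists>w t. threshold_weights A F w t)"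

lemma threshold_on_cong:
  "threshold_on A F \<Longrightarrow> (\<And>X. X \<subseteq> A \<Longrightarrow> F X = G X) \<Longrightarrow> threshold_on A G"
  unfolding threshold_on_def threshold_weights_def by metis

lemma threshold_on_never:
  assumes "finite A"
  shows "threshold_on A (\<lambda>X. False)"
proof -
  have "sum (\<lambda>_. 1) X + 1 \<le> real (card A) + 1" if "X \<subseteq> A" for X
    using card_mono[OF assms that] by simp
  then have "threshold_weights A (\<lambda>X. False) (\<lambda>_. 1) (real (card A) + 1)"
    unfolding threshold_weights_def by simp
  then show ?thesis unfolding threshold_on_def by blast
qed

lemma threshold_on_superset:
  assumes A: "finite A" and eA: "e \<subseteq> A"
  shows "threshold_on A (\<lambda>X. e \<subseteq> X)"
proof -
  define N where "N = real (card A) + 1"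
  define w where "w = (\<lambda>v. if v \<in> e then N else 1)"
  have N: "1 \<le> N" unfolding N_def by simp
  have sum_w: "sum w X = N * card (X \<inter> e) + card (X - e)" if "X \<subseteq> A" for X
  proof -
    have "finite X" using A that finite_subset by blast
    then have "sum w X = sum w (X \<inter> e) + sum w (X - e)"
      by (simp add: sum.Int_Diff)
    then show ?thesis unfolding w_def by simp
  qed
  have "N * card e \<le> sum w X" if "X \<subseteq> A" "e \<subseteq> X" for X
    using sum_w[OF that(1)] that(2) by (simp add: Int_absorb1)
  moreover have "sum w X + 1 \<le> N * card e" if X: "X \<subseteq> A" "\<not> e \<subseteq> X" for X
  proof -
    have "card (X \<inter> e) < card e"
      using X by (intro psubset_card_mono) (auto intro: finite_subset[OF eA A])
    then have "N * card (X \<inter> e) \<le> N * (real (card e) - 1)"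
      using N by (intro mult_left_mono) auto
    moreover have "card (X - e) \<le> card A"
      using X A by (meson Diff_subset card_mono order_trans)
    ultimately show ?thesis using sum_w[OF X(1)] unfolding N_def by (simp add: algebra_simps)
  qed
  ultimately have "threshold_weights A (\<lambda>X. e \<subseteq> X) w (N * card e)"
    using N unfolding threshold_weights_def w_def by auto
  then show ?thesis unfolding threshold_on_def by blast
qed

locale threshold_glue =
  fixes I J :: "'a set" and z :: 'a and F1 F2 :: "'a set \<Rightarrow> bool"
    and w1 w2 :: "'a \<Rightarrow> real" and t1 t2 :: real
  assumes finite_I: "finite I" and finite_J: "finite J"
    and z_notin: "z \<notin> I" "z \<notin> J" and disjoint: "I \<inter> J = {}"
    and weights1: "threshold_weights I F1 w1 t1" and weights2: "threshold_weights J F2 w2 t2"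
    and F1_I: "F1 I"
begin

definition F :: "'a set \<Rightarrow> bool" where
  "F X \<longleftrightarrow> (z \<in> X \<and> F1 (X \<inter> I)) \<or> (I \<subseteq> X \<and> F2 (X \<inter> J))"

text \<open>The weights on I are scaled by c so that missing one vertex of I outweighs all of J;
  the weight of z makes up exactly for F1 being weaker than "all of I".\<close>

definition c :: real where "c = sum w2 J + \<bar>t2\<bar> + 2"

definition \<alpha> :: real where "\<alpha> = c * (sum w1 I - t1) + t2 + \<bar>t2\<bar> + 1"

definition w :: "'a \<Rightarrow> real" where
  "w v = (if v = z then \<alpha> else if v \<in> I then c * w1 v else w2 v)"

definition T :: real where "T = c * sum w1 I + t2"

lemma w1_ge: "v \<in> I \<Longrightarrow> 1 \<le> w1 v" and w2_ge: "v \<in> J \<Longrightarrow> 1 \<le> w2 v"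
  using weights1 weights2 unfolding threshold_weights_def by auto

lemma threshold1: "X \<subseteq> I \<Longrightarrow> (F1 X \<longrightarrow> t1 \<le> sum w1 X) \<and> (\<not> F1 X \<longrightarrow> sum w1 X + 1 \<le> t1)"
  and threshold2: "Y \<subseteq> J \<Longrightarrow> (F2 Y \<longrightarrow> t2 \<le> sum w2 Y) \<and> (\<not> F2 Y \<longrightarrow> sum w2 Y + 1 \<le> t2)"
  using weights1 weights2 unfolding threshold_weights_def by auto

lemma sum_w2_bounds: "Y \<subseteq> J \<Longrightarrow> 0 \<le> sum w2 Y \<and> sum w2 Y \<le> sum w2 J"
  using w2_ge finite_J by (fastforce intro: sum_nonneg sum_mono2)

lemma c_ge_2: "2 \<le> c"
  using sum_w2_bounds[of J] unfolding c_def by simp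

lemma t1_le: "t1 \<le> sum w1 I"
  using threshold1[of I] F1_I by simp

lemma sum_w:
  assumes "X \<subseteq> insert z (I \<union> J)"
  shows "sum w X = (if z \<in> X then \<alpha> else 0) + c * sum w1 (X \<inter> I) + sum w2 (X \<inter> J)"
proof -
  have fin: "finite X" using assms finite_I finite_J finite_subset by blast
  have X: "X = (X \<inter> {z}) \<union> (X \<inter> I) \<union> (X \<inter> J)" using assms by blast
  have "sum w X = sum w (X \<inter> {z}) + sum w (X \<inter> I) + sum w (X \<inter> J)"
    by (subst X, subst sum.union_disjoint, use fin z_notin disjoint in auto)
      (subst sum.union_disjoint, use fin z_notin in auto)
  also have "sum w (X \<inter> I) = c * sum w1 (X \<inter> I)"
    using z_notin by (auto simp: sum_distrib_left w_def intro!: sum.cong)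
  also have "sum w (X \<inter> J) = sum w2 (X \<inter> J)"
    using z_notin disjoint by (intro sum.cong) (auto simp: w_def)
  finally show ?thesis by (cases "z \<in> X") (auto simp: w_def Int_insert_right)
qed

lemma one_le_w:
  assumes "v \<in> insert z (I \<union> J)"
  shows "1 \<le> w v"
proof -
  have "1 \<le> c * w1 v" if "v \<in> I"
    using c_ge_2 w1_ge[OF that] mult_le_cancel_left1[of c "w1 v"] by linarith
  moreover have "0 \<le> c * (sum w1 I - t1)" using c_ge_2 t1_le by simp
  ultimately show ?thesis using assms c_ge_2 w2_ge unfolding w_def \<alpha>_def by auto
qed

lemma T_le_sum_w:
  assumes X: "X \<subseteq> insert z (I \<union> J)" and "F X"
  shows "T \<le> sum w X"
proof (cases "z \<in> X \<and> F1 (X \<inter> I)")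
  case True
  then have "c * t1 \<le> c * sum w1 (X \<inter> I)"
    using threshold1[of "X \<inter> I"] c_ge_2 by (intro mult_left_mono) auto
  moreover have "T \<le> \<alpha> + c * t1"
    using abs_ge_zero[of t2] unfolding T_def \<alpha>_def by (simp add: algebra_simps)
  ultimately show ?thesis
    using True sum_w[OF X] sum_w2_bounds[of "X \<inter> J"] by simp
next
  case False
  with \<open>F X\<close> have "I \<subseteq> X" "F2 (X \<inter> J)" unfolding F_def by auto
  moreover have "z \<notin> X" using False \<open>I \<subseteq> X\<close> F1_I by (metis inf.absorb_iff2)
  ultimately show ?thesis
    using sum_w[OF X] threshold2[of "X \<inter> J"] unfolding T_def by (simp add: Int_absorb1)
qed

lemma sum_w_less_T:
  assumes X: "X \<subseteq> insert z (I \<union> J)" and nF: "\<not> F X"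
  shows "sum w X + 1 \<le> T"
proof -
  have J: "sum w2 (X \<inter> J) \<le> sum w2 J" using sum_w2_bounds by simp
  consider "z \<in> X" | "z \<notin> X" "I \<subseteq> X" | "z \<notin> X" "\<not> I \<subseteq> X" by blast
  then show ?thesis
  proof cases
    case 1
    then have "c * (sum w1 (X \<inter> I) + 1) \<le> c * t1"
      using nF threshold1[of "X \<inter> I"] c_ge_2 unfolding F_def by (intro mult_left_mono) auto
    then show ?thesis using 1 sum_w[OF X] J unfolding T_def \<alpha>_def c_def by (simp add: algebra_simps)
  next
    case 2
    then show ?thesis
      using nF sum_w[OF X] threshold2[of "X \<inter> J"] unfolding F_def T_def by (simp add: Int_absorb1)
  next
    case 3
    then obtain v where v: "v \<in> I" "v \<notin> X" by blast
    have "sum w1 (X \<inter> I) \<le> sum w1 (I - {v})"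
      using finite_I v by (intro sum_mono2) (auto dest: w1_ge)
    also have "\<dots> = sum w1 I - w1 v" using finite_I v by (simp add: sum_diff1)
    finally have "c * (sum w1 (X \<inter> I) + 1) \<le> c * sum w1 I"
      using w1_ge[OF v(1)] c_ge_2 by (intro mult_left_mono) auto
    then show ?thesis using 3 sum_w[OF X] J unfolding T_def c_def by (simp add: algebra_simps)
  qed
qed

lemma threshold_weights_F: "threshold_weights (insert z (I \<union> J)) F w T"
  using one_le_w T_le_sum_w sum_w_less_T unfolding threshold_weights_def by blast

end

lemma threshold_on_glue:
  assumes "finite I" "finite J" "z \<notin> I" "z \<notin> J" "I \<inter> J = {}"
    and "threshold_on I F1" "threshold_on J F2" "F1 I"
  shows "threshold_on (insert z (I \<union> J))
           (\<lambda>X. (z \<in> X \<and> F1 (X \<inter> I)) \<or> (I \<subseteq> X \<and> F2 (X \<inter> J)))"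
proof -
  obtain w1 t1 w2 t2 where "threshold_weights I F1 w1 t1" "threshold_weights J F2 w2 t2"
    using assms(6,7) unfolding threshold_on_def by blast
  then interpret threshold_glue I J z F1 F2 w1 w2 t1 t2
    using assms by unfold_locales
  show ?thesis
    using threshold_weights_F unfolding threshold_on_def F_def[abs_def] by blast
qed

lemma threshold_weights_complement:
  assumes A: "finite A" and weights: "threshold_weights A F w t" and S: "S \<subseteq> A"
  shows "sum w A - t + 1 \<le> sum w S \<longleftrightarrow> \<not> F (A - S)"
proof -
  have "sum w (A - S) = sum w A - sum w S" using A S by (simp add: sum_diff)
  moreover have "(F (A - S) \<longrightarrow> t \<le> sum w (A - S)) \<and> (\<not> F (A - S) \<longrightarrow> sum w (A - S) + 1 \<le> t)"
    using weights unfolding threshold_weights_def by blast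
  ultimately show ?thesis by (cases "F (A - S)") auto
qed


lemma one_sperner_Diff_nonempty:
  assumes "one_sperner H" "e \<in> H" "f \<in> H" "e \<noteq> f"
  shows "e - f \<noteq> {}"
proof
  assume "e - f = {}"
  then have "card (e - f) = 0" by (simp only: card.empty)
  moreover have "min (card (e - f)) (card (f - e)) = 1"
    using assms unfolding one_sperner_def by blast
  ultimately show False by simp
qed

lemma one_sperner_card_Diff_eq_1:
  assumes "one_sperner H" "e \<in> H" "f \<in> H" "e \<noteq> f"
    and "finite e" "finite f" "card e \<le> card f"
  shows "card (e - f) = 1"
proof -
  have "card (e - f) \<le> card (f - e)"
    using assms(5-7) by (simp add: card_Diff_subset_Int Int_commute)
  moreover have "min (card (e - f)) (card (f - e)) = 1"
    using assms(1-4) unfolding one_sperner_def by blast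
  ultimately show ?thesis by (simp add: min_def)
qed

lemma one_sperner_image_Diff:
  assumes "one_sperner H" "G \<subseteq> H" "\<And>e. e \<in> G \<Longrightarrow> D \<subseteq> e"
  shows "one_sperner ((\<lambda>e. e - D) ` G)"
  unfolding one_sperner_def
proof (intro ballI impI)
  fix a b assume "a \<in> (\<lambda>e. e - D) ` G" "b \<in> (\<lambda>e. e - D) ` G" "a \<noteq> b"
  then obtain e f where "e \<in> G" "f \<in> G" "a = e - D" "b = f - D" "e \<noteq> f"
    by blast
  moreover have "a - b = e - f" "b - a = f - e"
    using calculation assms(3) by blast+
  moreover have "min (card (e - f)) (card (f - e)) = 1"
    using calculation assms(1,2) unfolding one_sperner_def by blast
  ultimately show "min (card (a - b)) (card (b - a)) = 1" by simp
qed

lemma card_1_imp_eq_singleton: "card A = 1 \<Longrightarrow> x \<in> A \<Longrightarrow> A = {x}"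
  by (metis card_1_singletonE singletonD)

text \<open>The pivot: take an edge m of least size and, among the other edges, an edge fs of largest
  size; m differs from fs in a single vertex z.\<close>

lemma one_sperner_pivot_Diff_subset:
  assumes sp: "one_sperner H" and fin: "\<forall>e\<in>H. finite e"
    and m: "m \<in> H" "\<forall>e\<in>H. card m \<le> card e"
    and fs: "fs \<in> H - {m}" "\<forall>e\<in>H - {m}. card e \<le> card fs"
    and m_fs: "m - fs = {z}"
    and e: "e \<in> H" "z \<in> e" and f: "f \<in> H" "z \<notin> f"
  shows "e - {z} \<subseteq> f"
proof -
  have m_Diff: "card (m - g) = 1" if "g \<in> H" "g \<noteq> m" for g
    using that m fin by (intro one_sperner_card_Diff_eq_1[OF sp]) auto
  have z: "z \<in> m" "z \<notin> fs" using m_fs by auto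
  then have m_f: "m - f = {z}"
    using m_Diff[OF f(1)] f(2) by (intro card_1_imp_eq_singleton) auto
  show ?thesis
  proof (cases "e = m")
    case True then show ?thesis using m_f by blast
  next
    case False
    then obtain y where m_e: "m - e = {y}" using m_Diff e(1) by (metis card_1_singletonE)
    then have "y \<noteq> z" using e(2) by auto
    then have y: "y \<in> f" "y \<in> fs" "y \<notin> e" using m_e m_f m_fs by auto
    have "e \<noteq> fs" "e \<in> H - {m}" using e z(2) False by auto
    then have "card (e - fs) = 1"
      using e(1) fs fin by (intro one_sperner_card_Diff_eq_1[OF sp]) auto
    then have e_fs: "e - fs = {z}" using e(2) z(2) by (intro card_1_imp_eq_singleton) auto
    show ?thesis
    proof (rule ccontr)
      assume not_sub: "\<not> e - {z} \<subseteq> f"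
      have "e \<noteq> f" using e(2) f(2) by auto
      then have "min (card (e - f)) (card (f - e)) = 1"
        using sp e(1) f(1) unfolding one_sperner_def by blast
      moreover have "card (e - f) \<noteq> 1"
      proof
        assume "card (e - f) = 1"
        then have "e - f = {z}" using e(2) f(2) by (intro card_1_imp_eq_singleton) auto
        then show False using not_sub by blast
      qed
      ultimately have "card (f - e) = 1" by (simp add: min_def split: if_splits)
      then have "f - e = {y}" using y(1,3) by (intro card_1_imp_eq_singleton) auto
      moreover have "e - {z} \<subseteq> fs" using e_fs by blast
      ultimately have "(f - e) \<union> (e - {z}) \<subseteq> fs" using y(2) by simp
      moreover have "f \<subseteq> (f - e) \<union> (e - {z})" using f(2) by blast
      ultimately have "f \<subseteq> fs" by (rule subset_trans[rotated])
      moreover have "f \<noteq> fs" using not_sub e_fs by blast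
      ultimately show False using one_sperner_Diff_nonempty[OF sp f(1), of fs] fs by auto
    qed
  qed
qed

lemma one_sperner_pivot:
  assumes V: "finite V" and HV: "\<forall>e\<in>H. e \<subseteq> V" and sp: "one_sperner H"
    and two: "e0 \<in> H" "f0 \<in> H" "e0 \<noteq> f0"
  shows "\<exists>z. (\<exists>e\<in>H. z \<in> e) \<and> (\<exists>f\<in>H. z \<notin> f) \<and>
           (\<forall>e\<in>H. \<forall>f\<in>H. z \<in> e \<longrightarrow> z \<notin> f \<longrightarrow> e - {z} \<subseteq> f)"
proof -
  have fin: "\<forall>e\<in>H. finite e" using HV V finite_subset by blast
  obtain m where m: "m \<in> H" "\<forall>e\<in>H. card m \<le> card e"
    using ex_has_least_nat[of "\<lambda>e. e \<in> H" e0 card] two by blast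
  obtain g where g: "g \<in> H - {m}" using two by blast
  have "\<forall>e. e \<in> H - {m} \<longrightarrow> card e < Suc (card V)"
    using HV V by (simp add: card_mono less_Suc_eq_le)
  then obtain fs where fs: "fs \<in> H - {m}" "\<forall>e\<in>H - {m}. card e \<le> card fs"
    using ex_has_greatest_nat[of "\<lambda>e. e \<in> H - {m}" g card "Suc (card V)"] g by blast
  have "card (m - fs) = 1"
    using fs m fin by (intro one_sperner_card_Diff_eq_1[OF sp]) auto
  then obtain z where m_fs: "m - fs = {z}" by (rule card_1_singletonE)
  then have "z \<in> m" "z \<notin> fs" by auto
  moreover have "\<forall>e\<in>H. \<forall>f\<in>H. z \<in> e \<longrightarrow> z \<notin> f \<longrightarrow> e - {z} \<subseteq> f"
    using one_sperner_pivot_Diff_subset[OF sp fin m fs m_fs] by blast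
  ultimately show ?thesis using m(1) fs(1) by (intro exI[of _ z]) blast
qed

lemma ex_subset_pivot_split:
  assumes P_I: "\<forall>e\<in>H. z \<in> e \<longrightarrow> e - {z} \<subseteq> I"
    and I_Q: "\<forall>e\<in>H. z \<notin> e \<longrightarrow> I \<subseteq> e \<and> e - I \<subseteq> J"
  shows "(\<exists>e\<in>H. e \<subseteq> X) \<longleftrightarrow>
           (z \<in> X \<and> (\<exists>p\<in>(\<lambda>e. e - {z}) ` {e \<in> H. z \<in> e}. p \<subseteq> X \<inter> I)) \<or>
           (I \<subseteq> X \<and> (\<exists>q\<in>(\<lambda>e. e - I) ` {e \<in> H. z \<notin> e}. q \<subseteq> X \<inter> J))"
    (is "_ \<longleftrightarrow> ?P \<or> ?Q")
proof
  assume "\<exists>e\<in>H. e \<subseteq> X"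
  then obtain e where e: "e \<in> H" "e \<subseteq> X" by blast
  show "?P \<or> ?Q"
  proof (cases "z \<in> e")
    case True
    have "e - {z} \<subseteq> X \<inter> I" using e True P_I by blast
    then have ?P using e True by blast
    then show ?thesis ..
  next
    case False
    have "e - I \<subseteq> X \<inter> J" "I \<subseteq> X" using e False I_Q by blast+
    then have ?Q using e False by blast
    then show ?thesis ..
  qed
qed blast

lemma one_sperner_threshold_on:
  assumes "finite V" "\<forall>e\<in>H. e \<subseteq> V" "one_sperner H"
  shows "threshold_on V (\<lambda>X. \<exists>e\<in>H. e \<subseteq> X)"
  using assms
proof (induction "card V" arbitrary: V H rule: less_induct)
  case less
  note V = less.prems(1) and HV = less.prems(2) and sp = less.prems(3)
  consider "H = {}" | e where "H = {e}" | e0 f0 where "e0 \<in> H" "f0 \<in> H" "e0 \<noteq> f0"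
    by blast
  then show ?case
  proof cases
    case 1
    show ?thesis by (rule threshold_on_cong[OF threshold_on_never[OF V]]) (simp add: 1)
  next
    case (2 e)
    show ?thesis
      by (rule threshold_on_cong[OF threshold_on_superset[OF V, of e]]) (use HV 2 in auto)
  next
    case 3
    obtain z where z: "\<exists>e\<in>H. z \<in> e" "\<exists>f\<in>H. z \<notin> f"
      and pivot: "\<forall>e\<in>H. \<forall>f\<in>H. z \<in> e \<longrightarrow> z \<notin> f \<longrightarrow> e - {z} \<subseteq> f"
      using one_sperner_pivot[OF V HV sp 3] by blast
    define I where "I = {v \<in> V. \<forall>f\<in>H. z \<notin> f \<longrightarrow> v \<in> f}"
    define J where "J = V - insert z I"
    let ?P = "(\<lambda>e. e - {z}) ` {e \<in> H. z \<in> e}"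
    let ?Q = "(\<lambda>e. e - I) ` {e \<in> H. z \<notin> e}"
    have zV: "z \<in> V" "z \<notin> I" using z HV unfolding I_def by blast+
    have P_I: "\<forall>e\<in>H. z \<in> e \<longrightarrow> e - {z} \<subseteq> I" using pivot HV unfolding I_def by blast
    have I_Q: "\<forall>e\<in>H. z \<notin> e \<longrightarrow> I \<subseteq> e \<and> e - I \<subseteq> J" using HV unfolding I_def J_def by blast
    have "card (V - {z}) < card V" using V zV(1) by (rule card_Diff1_less)
    then have card: "card I < card V" "card J < card V"
      using V zV card_mono[of "V - {z}" I] card_mono[of "V - {z}" J]
      unfolding I_def J_def by fastforce+
    have "threshold_on I (\<lambda>X. \<exists>p\<in>?P. p \<subseteq> X)"
    proof (rule less.hyps[OF card(1)])
      show "finite I" using V unfolding I_def by simp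
      show "\<forall>p\<in>?P. p \<subseteq> I" using P_I by blast
      show "one_sperner ?P" by (rule one_sperner_image_Diff[OF sp]) auto
    qed
    moreover have "threshold_on J (\<lambda>X. \<exists>q\<in>?Q. q \<subseteq> X)"
    proof (rule less.hyps[OF card(2)])
      show "finite J" using V unfolding J_def by simp
      show "\<forall>q\<in>?Q. q \<subseteq> J" using I_Q by blast
      show "one_sperner ?Q" by (rule one_sperner_image_Diff[OF sp]) (use I_Q in auto)
    qed
    moreover have "\<exists>p\<in>?P. p \<subseteq> I" using z(1) P_I by blast
    ultimately have glued: "threshold_on (insert z (I \<union> J))
        (\<lambda>X. (z \<in> X \<and> (\<exists>p\<in>?P. p \<subseteq> X \<inter> I)) \<or> (I \<subseteq> X \<and> (\<exists>q\<in>?Q. q \<subseteq> X \<inter> J)))"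
      using V zV by (intro threshold_on_glue) (auto simp: I_def J_def)
    have "insert z (I \<union> J) = V" using zV unfolding I_def J_def by blast
    show ?thesis
      by (rule threshold_on_cong[OF glued[unfolded \<open>insert z (I \<union> J) = V\<close>]])
        (rule ex_subset_pivot_split[OF P_I I_Q, symmetric])
  qed
qed

lemma rtranclp_restrict_mono:
  assumes "S \<subseteq> T" "(\<lambda>u v. E u v \<and> u \<in> S \<and> v \<in> S)\<^sup>*\<^sup>* x y"
  shows "(\<lambda>u v. E u v \<and> u \<in> T \<and> v \<in> T)\<^sup>*\<^sup>* x y"
  using assms(2) by (rule rtranclp_mono[THEN predicate2D, rotated]) (use assms(1) in auto)

lemma rtranclp_restrict_sym:
  assumes "graph V E" "(\<lambda>u v. E u v \<and> u \<in> S \<and> v \<in> S)\<^sup>*\<^sup>* x y"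
  shows "(\<lambda>u v. E u v \<and> u \<in> S \<and> v \<in> S)\<^sup>*\<^sup>* y x"
proof -
  have "symp (\<lambda>u v. E u v \<and> u \<in> S \<and> v \<in> S)"
    using assms(1) unfolding graph_def by (auto intro: sympI)
  then show ?thesis using assms(2) by (blast intro: sympD[OF symp_rtranclp])
qed

lemma cd_set_meets_cutset:
  assumes g: "graph V E" and cd: "cd_set V E S" and C: "cutset V E C"
  shows "S \<inter> C \<noteq> {}"
proof
  assume SC: "S \<inter> C = {}"
  let ?R = "\<lambda>u v. E u v \<and> u \<in> V - C \<and> v \<in> V - C"
  have S: "S \<subseteq> V - C" using cd SC unfolding cd_set_def dominating_def by blast
  have dom: "\<forall>v\<in>V - S. \<exists>u\<in>S. E v u" using cd unfolding cd_set_def dominating_def by blast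
  have to_S: "\<exists>s\<in>S. ?R\<^sup>*\<^sup>* x s" if "x \<in> V - C" for x
  proof (cases "x \<in> S")
    case False
    then have "x \<in> V - S" using that by blast
    then obtain u where "u \<in> S" "E x u" using dom by blast
    then show ?thesis using that S by blast
  qed blast
  have "?R\<^sup>*\<^sup>* x y" if xy: "x \<in> V - C" "y \<in> V - C" for x y
  proof -
    obtain s s' where s: "s \<in> S" "?R\<^sup>*\<^sup>* x s" and s': "s' \<in> S" "?R\<^sup>*\<^sup>* y s'"
      using to_S xy by meson
    have "(\<lambda>u v. E u v \<and> u \<in> S \<and> v \<in> S)\<^sup>*\<^sup>* s s'"
      using cd s(1) s'(1) unfolding cd_set_def connected_on_def by blast
    then have "?R\<^sup>*\<^sup>* s s'" by (rule rtranclp_restrict_mono[OF S])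
    moreover have "?R\<^sup>*\<^sup>* s' y" using rtranclp_restrict_sym[OF g s'(2)] .
    ultimately show ?thesis using s(2) by (meson rtranclp_trans)
  qed
  then show False using C unfolding cutset_def connected_on_def by blast
qed

lemma cutset_if_no_neighbour:
  assumes g: "graph V E" and S: "S \<subseteq> V" "s \<in> S" and v: "v \<in> V - S"
    and no_nb: "\<forall>u\<in>S. \<not> E v u"
  shows "cutset V E (V - insert v S)"
proof -
  let ?R = "\<lambda>u w. E u w \<and> u \<in> insert v S \<and> w \<in> insert v S"
  have "\<not> ?R\<^sup>*\<^sup>* v s"
  proof
    assume "?R\<^sup>*\<^sup>* v s"
    then show False
    proof (cases rule: converse_rtranclpE)
      case base then show False using S v by blast
    next
      case (step u)
      then have "u \<noteq> v" using g unfolding graph_def by blast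
      then show False using step no_nb by blast
    qed
  qed
  moreover have "V - (V - insert v S) = insert v S" using S v by blast
  ultimately show ?thesis using S unfolding cutset_def connected_on_def by auto
qed

lemma cd_set_iff_meets_cutsets:
  assumes g: "graph V E" and V: "V \<noteq> {}" and S: "S \<subseteq> V"
  shows "cd_set V E S \<longleftrightarrow> S \<noteq> {} \<and> (\<forall>C. cutset V E C \<longrightarrow> S \<inter> C \<noteq> {})"
proof
  assume cd: "cd_set V E S"
  then have "S \<noteq> {}" using V unfolding cd_set_def dominating_def by blast
  then show "S \<noteq> {} \<and> (\<forall>C. cutset V E C \<longrightarrow> S \<inter> C \<noteq> {})"
    using cd_set_meets_cutset[OF g cd] by blast
next
  assume meets: "S \<noteq> {} \<and> (\<forall>C. cutset V E C \<longrightarrow> S \<inter> C \<noteq> {})"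
  have "\<exists>u\<in>S. E v u" if "v \<in> V - S" for v
    using meets cutset_if_no_neighbour[OF g S _ that] by blast
  moreover have "connected_on E S"
  proof (rule ccontr)
    assume "\<not> connected_on E S"
    then have "cutset V E (V - S)" using S unfolding cutset_def by (simp add: Diff_Diff_Int Int_absorb1)
    then show False using meets by blast
  qed
  ultimately show "cd_set V E S" using S unfolding cd_set_def dominating_def by blast
qed

lemma exists_minimal_cutset:
  assumes V: "finite V" and C: "cutset V E C"
  shows "\<exists>C'\<subseteq>C. minimal_cutset V E C'"
proof -
  have "{T. cutset V E T} \<subseteq> Pow V" unfolding cutset_def by blast
  then have "finite {T. cutset V E T}" using V by (simp add: finite_subset)
  then obtain C' where "cutset V E C'" "C' \<subseteq> C" "\<forall>T. cutset V E T \<longrightarrow> T \<subseteq> C' \<longrightarrow> C' = T"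
    using finite_has_minimal2[of "{T. cutset V E T}" C] C by auto
  then show ?thesis unfolding minimal_cutset_def by blast
qed

lemma meets_cutsets_iff:
  assumes V: "finite V"
  shows "(\<forall>C. cutset V E C \<longrightarrow> S \<inter> C \<noteq> {}) \<longleftrightarrow> (\<forall>e\<in>cutset_hyperedges V E. \<not> e \<subseteq> V - S)"
proof
  assume meets: "\<forall>C. cutset V E C \<longrightarrow> S \<inter> C \<noteq> {}"
  show "\<forall>e\<in>cutset_hyperedges V E. \<not> e \<subseteq> V - S"
  proof
    fix e assume "e \<in> cutset_hyperedges V E"
    then have "cutset V E e" unfolding cutset_hyperedges_def minimal_cutset_def by simp
    then show "\<not> e \<subseteq> V - S" using meets by blast
  qed
next
  assume no_edge: "\<forall>e\<in>cutset_hyperedges V E. \<not> e \<subseteq> V - S"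
  show "\<forall>C. cutset V E C \<longrightarrow> S \<inter> C \<noteq> {}"
  proof (intro allI impI)
    fix C assume "cutset V E C"
    then obtain C' where C': "C' \<subseteq> C" "minimal_cutset V E C'"
      using exists_minimal_cutset[OF V] by blast
    then have "C' \<subseteq> V" "\<not> C' \<subseteq> V - S"
      using no_edge unfolding cutset_hyperedges_def minimal_cutset_def cutset_def by auto
    then show "S \<inter> C \<noteq> {}" using C'(1) by blast
  qed
qed

lemma cd_set_iff_hyperedges:
  assumes "graph V E" "V \<noteq> {}" "S \<subseteq> V"
  shows "cd_set V E S \<longleftrightarrow> S \<noteq> {} \<and> (\<forall>e\<in>cutset_hyperedges V E. \<not> e \<subseteq> V - S)"
  using cd_set_iff_meets_cutsets[OF assms] meets_cutsets_iff[of V E S] assms(1)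
  unfolding graph_def by blast

lemma cd_set_Diff_iff:
  assumes g: "graph V E" and e: "e \<in> cutset_hyperedges V E" and A: "A \<subseteq> V"
  shows "cd_set V E (V - A) \<longleftrightarrow> (\<forall>e\<in>cutset_hyperedges V E. \<not> e \<subseteq> A)"
proof -
  have "e \<subseteq> V" "\<not> connected_on E (V - e)"
    using e unfolding cutset_hyperedges_def minimal_cutset_def cutset_def by auto
  then have "V \<noteq> {}" unfolding connected_on_def by blast
  moreover have "V - (V - A) = A" using A by blast
  moreover have "V - A \<noteq> {}" if "\<forall>e\<in>cutset_hyperedges V E. \<not> e \<subseteq> A"
    using that e \<open>e \<subseteq> V\<close> by blast
  ultimately show ?thesis using cd_set_iff_hyperedges[OF g, of "V - A"] by auto
qed

lemma connected_domishold_if_one_sperner: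
  assumes g: "graph V E" and sp: "one_sperner (cutset_hyperedges V E)"
  shows "connected_domishold V E"
proof -
  let ?H = "cutset_hyperedges V E"
  have V: "finite V" using g unfolding graph_def by blast
  have HV: "\<forall>e\<in>?H. e \<subseteq> V"
    unfolding cutset_hyperedges_def minimal_cutset_def cutset_def by blast
  consider "V = {}" | "V \<noteq> {}" "?H = {}" | e where "e \<in> ?H" by blast
  then show ?thesis
  proof cases
    case 1
    then show ?thesis
      by (auto simp: connected_domishold_def cd_set_def dominating_def connected_on_def)
  next
    case 2
    have "real (card S) \<ge> 1 \<longleftrightarrow> cd_set V E S" if "S \<subseteq> V" for S
      using cd_set_iff_hyperedges[OF g 2(1) that] 2(2) V that
      by (auto simp: Suc_le_eq card_gt_0_iff intro: finite_subset)
    then show ?thesis unfolding connected_domishold_def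
      by (intro disjI2 exI[of _ "\<lambda>_. 1"] exI[of _ 1]) auto
  next
    case (3 e)
    obtain w t where weights: "threshold_weights V (\<lambda>X. \<exists>e\<in>?H. e \<subseteq> X) w t"
      using one_sperner_threshold_on[OF V HV sp] unfolding threshold_on_def by blast
    have "t \<le> sum w V" using weights 3 HV unfolding threshold_weights_def by blast
    moreover have "sum w V - t + 1 \<le> sum w S \<longleftrightarrow> cd_set V E S" if "S \<subseteq> V" for S
    proof -
      have "V - (V - S) = S" using that by blast
      then show ?thesis
        using threshold_weights_complement[OF V weights that] cd_set_Diff_iff[OF g 3, of "V - S"]
        by auto
    qed
    moreover have "\<forall>v\<in>V. 0 \<le> w v"
      using weights unfolding threshold_weights_def by (auto intro: order_trans[OF zero_le_one])
    ultimately show ?thesis unfolding connected_domishold_def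
      by (intro disjI2 exI[of _ w] exI[of _ "sum w V - t + 1"]) auto
  qed
qed

lemma sum_add_eq_if_membership_counts_eq:
  fixes w :: "'a \<Rightarrow> 'b::comm_semiring_1"
  assumes V: "finite V" and sub: "A1 \<subseteq> V" "A2 \<subseteq> V" "B1 \<subseteq> V" "B2 \<subseteq> V"
    and counts: "\<forall>v\<in>V. (of_bool (v \<in> A1) + of_bool (v \<in> A2) :: nat)
                      = of_bool (v \<in> B1) + of_bool (v \<in> B2)"
  shows "sum w A1 + sum w A2 = sum w B1 + sum w B2"
proof -
  have as_sum: "sum w A = (\<Sum>v\<in>V. if v \<in> A then w v else 0)" if "A \<subseteq> V" for A
    using sum.inter_restrict[OF V, of w A] that by (simp add: Int_absorb1)
  have "(if v \<in> A1 then w v else 0) + (if v \<in> A2 then w v else 0)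
        = (if v \<in> B1 then w v else 0) + (if v \<in> B2 then w v else 0)" if "v \<in> V" for v
    using counts that by (cases "v \<in> A1"; cases "v \<in> A2"; cases "v \<in> B1"; cases "v \<in> B2") auto
  then show ?thesis
    using sub by (simp add: as_sum sum.distrib[symmetric] cong: sum.cong)
qed

lemma membership_counts_differ_if_connected_domishold:
  assumes g: "graph V E" and cd: "connected_domishold V E"
    and sub: "A1 \<subseteq> V" "A2 \<subseteq> V" "B1 \<subseteq> V" "B2 \<subseteq> V"
    and A: "e1 \<in> cutset_hyperedges V E" "e1 \<subseteq> A1" "e2 \<in> cutset_hyperedges V E" "e2 \<subseteq> A2"
    and B: "\<forall>e\<in>cutset_hyperedges V E. \<not> e \<subseteq> B1" "\<forall>e\<in>cutset_hyperedges V E. \<not> e \<subseteq> B2"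
  shows "\<not> (\<forall>v\<in>V. (of_bool (v \<in> A1) + of_bool (v \<in> A2) :: nat)
                  = of_bool (v \<in> B1) + of_bool (v \<in> B2))"
proof
  assume counts: "\<forall>v\<in>V. (of_bool (v \<in> A1) + of_bool (v \<in> A2) :: nat)
                    = of_bool (v \<in> B1) + of_bool (v \<in> B2)"
  have V: "finite V" using g unfolding graph_def by blast
  have "connected_on E V"
  proof (rule ccontr)
    assume "\<not> connected_on E V"
    then have "{} \<in> cutset_hyperedges V E"
      unfolding cutset_hyperedges_def minimal_cutset_def cutset_def by simp
    then show False using B(1) by blast
  qed
  then obtain w :: "'a \<Rightarrow> real" and t where w: "\<forall>S. S \<subseteq> V \<longrightarrow> (t \<le> sum w S \<longleftrightarrow> cd_set V E S)"
    using cd unfolding connected_domishold_def by blast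
  have below: "sum w (V - A) < t" if "\<not> cd_set V E (V - A)" for A
    using w that by (meson Diff_subset not_le)
  have above: "t \<le> sum w (V - B)" if "cd_set V E (V - B)" for B
    using w that by blast
  have "sum w (V - A1) < t" "sum w (V - A2) < t"
    using below cd_set_Diff_iff[OF g A(1)] sub A by blast+
  moreover have "t \<le> sum w (V - B1)" "t \<le> sum w (V - B2)"
    using above cd_set_Diff_iff[OF g A(1)] sub B by blast+
  moreover have "sum w (V - A1) + sum w (V - A2) = sum w (V - B1) + sum w (V - B2)"
    using sum_add_eq_if_membership_counts_eq[OF V sub counts, of w] V sub by (simp add: sum_diff)
  ultimately show False by linarith
qed

lemma two_asummable_if_connected_domishold:
  assumes "graph V E" "connected_domishold V E"
  shows "two_asummable V (cutset_hyperedges V E)"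
  unfolding two_asummable_def two_summable_def
proof (intro notI, elim exE conjE bexE)
  fix A1 A2 B1 B2 e1 e2
  assume prems: "A1 \<subseteq> V" "A2 \<subseteq> V" "B1 \<subseteq> V" "B2 \<subseteq> V"
    "e1 \<in> cutset_hyperedges V E" "e1 \<subseteq> A1" "e2 \<in> cutset_hyperedges V E" "e2 \<subseteq> A2"
    "\<forall>e\<in>cutset_hyperedges V E. \<not> e \<subseteq> B1" "\<forall>e\<in>cutset_hyperedges V E. \<not> e \<subseteq> B2"
    "\<forall>v\<in>V. (of_bool (v \<in> A1) + of_bool (v \<in> A2) :: nat) = of_bool (v \<in> B1) + of_bool (v \<in> B2)"
  show False
    using membership_counts_differ_if_connected_domishold[OF assms prems(1-10)] prems(11) by blast
qed

theorem mainTheorem2: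
  fixes V :: "'a set" and E :: "'a \<Rightarrow> 'a \<Rightarrow> bool"
  assumes "graph V E"
  shows "(one_sperner (cutset_hyperedges V E) \<longrightarrow> connected_domishold V E)
       \<and> (connected_domishold V E \<longrightarrow> two_asummable V (cutset_hyperedges V E))"
  using connected_domishold_if_one_sperner[OF assms] two_asummable_if_connected_domishold[OF assms]
  by blast

end
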